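(* Let $\epsilon>0$. For every $\sigma^2>\sigma^*(\epsilon)^2$ there exists a real random variable $N^*$ with $\mathbb{E}[(N^* )^2]\le\sigma^2$ and some $\bar\epsilon<\epsilon$ such that the mechanism $a\mapsto a+N^*$ satisfies $\bar\epsilon$-DP, i.e., for all $a_0,a_1\in\mathbb{R}$ with $|a_0-a_1|\le1$ and every Borel set $\mathcal{B}\subseteq\mathbb{R}$, $\mathbb{P}(a_0+N^*\in\mathcal{B})\le e^{\bar\epsilon}\,\mathbb{P}(a_1+N^*\in\mathcal{B})$.
   Context: $\sigma^*(\epsilon)^2=\dfrac{2^{2/3}e^{-2\epsilon/3}(1+e^{-2\epsilon/3})+e^{-\epsilon}}{(1-e^{-\epsilon})^2}$. *)

theory Defs
  imports "HOL-Probability.Probability"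
begin

definition sigma_star_sq :: "real \<Rightarrow> real" where
  "sigma_star_sq \<epsilon> =
     (2 powr (2/3) * exp (-2*\<epsilon>/3) * (1 + exp (-2*\<epsilon>/3)) + exp (-\<epsilon>))
     / (1 - exp (-\<epsilon>))^2"

end

theory Submission
  imports Defs
begin

text \<open>
  The noise is a staircase distribution: with \<open>b = exp (-e)\<close> and a step offset \<open>0 < g < 1\<close>,
  its density is proportional to \<open>b ^ k\<close> on the shell \<open>k - 1 + g < \<bar>x\<bar> \<le> k + g\<close>.
  Shifting the argument by at most \<open>1\<close> raises the shell index by at most \<open>1\<close>, so the
  densities of \<open>a0 + N\<close> and \<open>a1 + N\<close> differ by a factor of at most \<open>1 / b = exp e\<close>.

  Writing \<open>b ^ level = (1 - b) * (\<Sum>k \<ge> level. b ^ k)\<close> turns every integral against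
  the density into a series of integrals over the intervals \<open>[-(k + g), k + g]\<close>, which gives
  the normalisation and the second moment in closed form.  For \<open>g = exp (-e/3)\<close> the second
  moment is at most \<open>\<sigma>*(e)\<^sup>2\<close> (even with the factor \<open>2 powr (2/3)\<close> replaced by \<open>1\<close>),
  and it depends continuously on \<open>e\<close>; hence some \<open>e < \<epsilon>\<close> still has second moment
  below \<open>\<sigma>2\<close>.
\<close>

lemma termdiffs_sums_of_nat_mult:
  fixes z :: "'a::{banach,real_normed_field}"
  assumes sums: "\<And>w. norm w < K \<Longrightarrow> (\<lambda>n. c n * w ^ n) sums f w"
    and deriv: "(f has_field_derivative f') (at z)" and "norm z < K"
  shows "(\<lambda>n. of_nat n * c n * z ^ n) sums (z * f')"
proof -
  have "(\<lambda>n. diffs c n * z ^ n) sums f'"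
    using termdiffs_sums_strong[OF sums deriv \<open>norm z < K\<close>] .
  then have "(\<lambda>n. of_nat (Suc n) * c (Suc n) * z ^ Suc n) sums (z * f')"
    using sums_mult[of _ f' z] by (simp add: diffs_def mult_ac)
  then show ?thesis
    by (subst (asm) sums_Suc_iff) simp
qed

lemma geometric_sums_times_n_squared:
  fixes z :: "'a::{banach,real_normed_field}"
  assumes "norm z < 1"
  shows "(\<lambda>n. of_nat n ^ 2 * z ^ n) sums (z * (1 + z) / (1 - z) ^ 3)"
proof -
  have "(\<lambda>n. of_nat n * of_nat n * z ^ n) sums (z * ((1 + z) / (1 - z) ^ 3))"
  proof (rule termdiffs_sums_of_nat_mult)
    show "(\<lambda>n. of_nat n * w ^ n) sums (w / (1 - w)\<^sup>2)" if "norm w < 1" for w :: 'a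
      using geometric_sums_times_n[OF that] by (simp add: mult.commute)
    have "1 - z \<noteq> 0" using assms by auto
    then show "((\<lambda>w. w / (1 - w)\<^sup>2) has_field_derivative (1 + z) / (1 - z) ^ 3) (at z)"
      by (auto intro!: derivative_eq_intros simp: divide_simps) algebra
  qed fact
  then show ?thesis by (simp add: power2_eq_square)
qed

lemma geometric_sums_times_n_cubed:
  fixes z :: "'a::{banach,real_normed_field}"
  assumes "norm z < 1"
  shows "(\<lambda>n. of_nat n ^ 3 * z ^ n) sums (z * (1 + 4 * z + z\<^sup>2) / (1 - z) ^ 4)"
proof -
  have "(\<lambda>n. of_nat n * of_nat n ^ 2 * z ^ n) sums (z * ((1 + 4 * z + z\<^sup>2) / (1 - z) ^ 4))"
  proof (rule termdiffs_sums_of_nat_mult)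
    show "(\<lambda>n. of_nat n ^ 2 * w ^ n) sums (w * (1 + w) / (1 - w) ^ 3)" if "norm w < 1" for w :: 'a
      using geometric_sums_times_n_squared[OF that] .
    have "1 - z \<noteq> 0" using assms by auto
    then show "((\<lambda>w. w * (1 + w) / (1 - w) ^ 3) has_field_derivative (1 + 4 * z + z\<^sup>2) / (1 - z) ^ 4) (at z)"
      by (auto intro!: derivative_eq_intros simp: divide_simps) algebra
  qed fact
  then show ?thesis by (simp add: power3_eq_cube power2_eq_square mult_ac)
qed

lemma geometric_sums_times_shifted_cube:
  fixes b g :: real
  assumes "\<bar>b\<bar> < 1"
  shows "(\<lambda>k. b ^ k * (real k + g) ^ 3) sums
    (b * (1 + 4 * b + b\<^sup>2) / (1 - b) ^ 4 + 3 * g * (b * (1 + b) / (1 - b) ^ 3)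
      + 3 * g\<^sup>2 * (b / (1 - b)\<^sup>2) + g ^ 3 * (1 / (1 - b)))"
proof -
  have "(\<lambda>k. real k ^ 3 * b ^ k + 3 * g * (real k ^ 2 * b ^ k) + 3 * g\<^sup>2 * (b ^ k * real k)
      + g ^ 3 * b ^ k) sums
    (b * (1 + 4 * b + b\<^sup>2) / (1 - b) ^ 4 + 3 * g * (b * (1 + b) / (1 - b) ^ 3)
      + 3 * g\<^sup>2 * (b / (1 - b)\<^sup>2) + g ^ 3 * (1 / (1 - b)))"
    using assms
    by (intro sums_add sums_mult geometric_sums_times_n_cubed geometric_sums_times_n_squared
        geometric_sums_times_n geometric_sums) auto
  moreover have "(\<lambda>k. real k ^ 3 * b ^ k + 3 * g * (real k ^ 2 * b ^ k) + 3 * g\<^sup>2 * (b ^ k * real k)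
      + g ^ 3 * b ^ k) = (\<lambda>k. b ^ k * (real k + g) ^ 3)"
    by (rule ext) (simp add: power3_eq_cube power2_eq_square algebra_simps)
  ultimately show ?thesis by simp
qed

lemma isCont_less_on_left:
  fixes f :: "real \<Rightarrow> real"
  assumes "isCont f x" "f x < c" "a < x"
  obtains y where "a < y" "y < x" "f y < c"
proof -
  have "\<forall>\<^sub>F y in at x. f y < c"
    using assms(1,2) by (auto simp: isCont_def intro: order_tendstoD)
  then have "\<forall>\<^sub>F y in at_left x. f y < c \<and> a < y \<and> y < x"
    using eventually_at_left_real[OF assms(3)] by (auto simp: eventually_at_split elim: eventually_conj)
  then show ?thesis
    using that by (auto dest: eventually_happens)
qed

lemma emeasure_density_lborel_translate:
  fixes f :: "real \<Rightarrow> ennreal"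
  assumes [measurable]: "f \<in> borel_measurable borel" "B \<in> sets borel"
  shows "emeasure (density lborel f) {x. a + x \<in> B} = (\<integral>\<^sup>+y. f (y - a) * indicator B y \<partial>lborel)"
proof -
  have "emeasure (density lborel f) {x. a + x \<in> B} = (\<integral>\<^sup>+x. f x * indicator B (a + x) \<partial>lborel)"
    by (subst emeasure_density) (auto intro!: nn_integral_cong split: split_indicator)
  also have "\<dots> = (\<integral>\<^sup>+y. f (y - a) * indicator B y \<partial>lborel)"
    by (subst nn_integral_real_affine[where c = 1 and t = a]) auto
  finally show ?thesis .
qed

definition staircase_level :: "real \<Rightarrow> real \<Rightarrow> nat" where
  "staircase_level g x = nat \<lceil>\<bar>x\<bar> - g\<rceil>"

lemma staircase_level_le_iff: "staircase_level g x \<le> k \<longleftrightarrow> \<bar>x\<bar> \<le> real k + g"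
  unfolding staircase_level_def by (simp add: nat_le_iff ceiling_le_iff algebra_simps)

lemma staircase_level_diff_le:
  assumes "\<bar>x - y\<bar> \<le> 1"
  shows "staircase_level g y \<le> Suc (staircase_level g x)"
proof -
  have "\<bar>x\<bar> \<le> real (staircase_level g x) + g"
    using staircase_level_le_iff by blast
  then show ?thesis
    using assms by (simp add: staircase_level_le_iff)
qed

lemma power_staircase_level_eq_suminf:
  fixes b :: real
  assumes "0 \<le> b" "b < 1"
  shows "ennreal (b ^ staircase_level g x)
    = (\<Sum>k. ennreal ((1 - b) * b ^ k) * indicator {-(real k + g) .. real k + g} x)"
proof -
  define L where "L = staircase_level g x"
  define f where "f k = (if L \<le> k then (1 - b) * b ^ k else 0)" for k
  have indicator_eq: "indicator {-(real k + g) .. real k + g} x = (if L \<le> k then 1 else 0 :: ennreal)" for k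
    by (auto simp: L_def staircase_level_le_iff indicator_def)
  have "(\<lambda>k. f (k + L)) sums b ^ L"
    using sums_mult[OF geometric_sums[of b], of "(1 - b) * b ^ L"] assms
    by (simp add: f_def power_add mult_ac)
  then have "f sums b ^ L"
    by (subst (asm) sums_iff_shift) (simp add: f_def)
  moreover have "0 \<le> f k" for k
    using assms by (simp add: f_def)
  ultimately have "(\<Sum>k. ennreal (f k)) = ennreal (b ^ L)"
    by (intro suminf_ennreal_eq)
  moreover have "ennreal ((1 - b) * b ^ k) * indicator {-(real k + g) .. real k + g} x = ennreal (f k)" for k
    unfolding indicator_eq f_def by simp
  ultimately show ?thesis
    by (simp add: L_def)
qed

lemma nn_integral_power_staircase_level:
  fixes q F :: "real \<Rightarrow> real"
  assumes b: "0 \<le> b" "b < 1" and "0 \<le> g"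
    and [measurable]: "q \<in> borel_measurable borel"
    and deriv: "\<And>x. (F has_real_derivative q x) (at x)" and nonneg: "\<And>x. 0 \<le> q x"
    and sums: "(\<lambda>k. (1 - b) * b ^ k * (F (real k + g) - F (-(real k + g)))) sums S"
  shows "(\<integral>\<^sup>+x. ennreal (q x * b ^ staircase_level g x) \<partial>lborel) = ennreal S"
proof -
  let ?I = "\<lambda>k::nat. {-(real k + g) .. real k + g}"
  have F_mono: "F u \<le> F v" if "u \<le> v" for u v
    using DERIV_nonneg_imp_nondecreasing[OF that] deriv nonneg by blast
  have slab: "(\<integral>\<^sup>+x. ennreal (q x) * indicator (?I k) x \<partial>lborel)
      = ennreal (F (real k + g) - F (-(real k + g)))" for k
    using \<open>0 \<le> g\<close> deriv nonneg by (intro nn_integral_FTC_Icc) auto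
  have "(\<integral>\<^sup>+x. ennreal (q x * b ^ staircase_level g x) \<partial>lborel)
      = (\<integral>\<^sup>+x. (\<Sum>k. ennreal ((1 - b) * b ^ k) * (ennreal (q x) * indicator (?I k) x)) \<partial>lborel)"
    using b nonneg
    by (intro nn_integral_cong) (simp add: ennreal_mult power_staircase_level_eq_suminf mult.left_commute)
  also have "\<dots> = (\<Sum>k. ennreal ((1 - b) * b ^ k) * (\<integral>\<^sup>+x. ennreal (q x) * indicator (?I k) x \<partial>lborel))"
    by (simp add: nn_integral_suminf nn_integral_cmult)
  also have "\<dots> = (\<Sum>k. ennreal ((1 - b) * b ^ k * (F (real k + g) - F (-(real k + g)))))"
    unfolding slab using b by (simp add: ennreal_mult')
  also have "\<dots> = ennreal S"
  proof (rule suminf_ennreal_eq[OF _ sums])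
    fix k
    have "F (-(real k + g)) \<le> F (real k + g)"
      using \<open>0 \<le> g\<close> by (intro F_mono) simp
    then show "0 \<le> (1 - b) * b ^ k * (F (real k + g) - F (-(real k + g)))"
      using b by simp
  qed
  finally show ?thesis .
qed

definition staircase_density :: "real \<Rightarrow> real \<Rightarrow> real \<Rightarrow> real" where
  "staircase_density b g x = (1 - b) * b ^ staircase_level g x / (2 * (g * (1 - b) + b))"

(* The prefactor is the normalising constant of staircase_density times (2/3) (1 - b);
   the bracket is the sum of b ^ k * (k + g) ^ 3. *)
definition staircase_second_moment :: "real \<Rightarrow> real \<Rightarrow> real" where
  "staircase_second_moment b g = (1 - b)\<^sup>2 / (3 * (g * (1 - b) + b)) *
     (b * (1 + 4 * b + b\<^sup>2) / (1 - b) ^ 4 + 3 * g * (b * (1 + b) / (1 - b) ^ 3)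
      + 3 * g\<^sup>2 * (b / (1 - b)\<^sup>2) + g ^ 3 * (1 / (1 - b)))"

definition staircase_noise :: "real \<Rightarrow> real \<Rightarrow> real measure" where
  "staircase_noise b g = density lborel (\<lambda>x. ennreal (staircase_density b g x))"

lemma staircase_density_measurable [measurable]: "staircase_density b g \<in> borel_measurable borel"
  unfolding staircase_density_def staircase_level_def by measurable

lemma staircase_density_nonneg: "0 < b \<Longrightarrow> b < 1 \<Longrightarrow> 0 \<le> g \<Longrightarrow> 0 \<le> staircase_density b g x"
  by (simp add: staircase_density_def)

lemma staircase_density_le:
  assumes "0 < b" "b < 1" "0 \<le> g" "\<bar>x - y\<bar> \<le> 1"
  shows "b * staircase_density b g x \<le> staircase_density b g y"
proof -
  have "(1 - b) * b ^ Suc (staircase_level g x) \<le> (1 - b) * b ^ staircase_level g y"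
    using assms staircase_level_diff_le by (intro mult_left_mono power_decreasing) auto
  then have "(1 - b) * b ^ Suc (staircase_level g x) / (2 * (g * (1 - b) + b))
      \<le> (1 - b) * b ^ staircase_level g y / (2 * (g * (1 - b) + b))"
    using assms by (intro divide_right_mono) auto
  then show ?thesis
    by (simp add: staircase_density_def mult_ac)
qed

lemma nn_integral_staircase_density:
  assumes "0 < b" "b < 1" "0 \<le> g"
  shows "(\<integral>\<^sup>+x. ennreal (staircase_density b g x) \<partial>lborel) = 1"
proof -
  define c where "c = (1 - b) / (2 * (g * (1 - b) + b))"
  have "0 < g * (1 - b) + b"
    using assms by (simp add: add_nonneg_pos)
  then have "0 \<le> c"
    using assms by (simp add: c_def)
  have "(\<lambda>k. 2 * c * (1 - b) * (b ^ k * real k + g * b ^ k))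
      sums (2 * c * (1 - b) * (b / (1 - b)\<^sup>2 + g * (1 / (1 - b))))"
    using assms by (intro sums_mult sums_add geometric_sums_times_n geometric_sums) auto
  moreover have "2 * c * (1 - b) * (b / (1 - b)\<^sup>2 + g * (1 / (1 - b))) = 1"
    using assms \<open>0 < g * (1 - b) + b\<close> by (simp add: c_def divide_simps) (simp add: algebra_simps power2_eq_square)
  moreover have "(\<lambda>k. 2 * c * (1 - b) * (b ^ k * real k + g * b ^ k))
      = (\<lambda>k. (1 - b) * b ^ k * (c * (real k + g) - c * (-(real k + g))))"
    by (rule ext) (simp add: algebra_simps)
  ultimately have "(\<integral>\<^sup>+x. ennreal (c * b ^ staircase_level g x) \<partial>lborel) = ennreal 1"
    using assms \<open>0 \<le> c\<close>
    by (intro nn_integral_power_staircase_level[where q = "\<lambda>_. c" and F = "\<lambda>x. c * x"])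
       (auto intro!: derivative_eq_intros)
  then show ?thesis
    by (simp add: staircase_density_def c_def)
qed

lemma nn_integral_square_staircase_density:
  assumes "0 < b" "b < 1" "0 \<le> g"
  shows "(\<integral>\<^sup>+x. ennreal (x\<^sup>2 * staircase_density b g x) \<partial>lborel)
    = ennreal (staircase_second_moment b g)"
proof -
  define c where "c = (1 - b) / (2 * (g * (1 - b) + b))"
  have "0 < g * (1 - b) + b"
    using assms by (simp add: add_nonneg_pos)
  then have "0 \<le> c"
    using assms by (simp add: c_def)
  have "(\<lambda>k. (1 - b)\<^sup>2 / (3 * (g * (1 - b) + b)) * (b ^ k * (real k + g) ^ 3))
      sums staircase_second_moment b g"
    unfolding staircase_second_moment_def
    using assms by (intro sums_mult geometric_sums_times_shifted_cube) auto
  moreover have "(\<lambda>k. (1 - b)\<^sup>2 / (3 * (g * (1 - b) + b)) * (b ^ k * (real k + g) ^ 3))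
      = (\<lambda>k. (1 - b) * b ^ k * (c * (real k + g) ^ 3 / 3 - c * (-(real k + g)) ^ 3 / 3))"
    using \<open>0 < g * (1 - b) + b\<close>
    by (intro ext) (simp add: c_def divide_simps power2_eq_square power3_eq_cube, simp add: algebra_simps)
  ultimately have "(\<integral>\<^sup>+x. ennreal (c * x\<^sup>2 * b ^ staircase_level g x) \<partial>lborel)
      = ennreal (staircase_second_moment b g)"
    using assms \<open>0 \<le> c\<close>
    by (intro nn_integral_power_staircase_level[where q = "\<lambda>x. c * x\<^sup>2" and F = "\<lambda>x. c * x ^ 3 / 3"])
       (auto intro!: derivative_eq_intros simp: power2_eq_square power3_eq_cube)
  then show ?thesis
    by (simp add: staircase_density_def c_def mult_ac)
qed

lemma space_staircase_noise [simp]: "space (staircase_noise b g) = UNIV"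
  by (simp add: staircase_noise_def)

lemma sets_staircase_noise [measurable_cong]: "sets (staircase_noise b g) = sets borel"
  by (simp add: staircase_noise_def)

lemma prob_space_staircase_noise:
  assumes "0 < b" "b < 1" "0 \<le> g"
  shows "prob_space (staircase_noise b g)"
  by (rule prob_spaceI)
     (simp add: staircase_noise_def emeasure_density nn_integral_staircase_density[OF assms])

lemma nn_integral_square_staircase_noise:
  assumes "0 < b" "b < 1" "0 \<le> g"
  shows "(\<integral>\<^sup>+x. ennreal (x\<^sup>2) \<partial>staircase_noise b g) = ennreal (staircase_second_moment b g)"
proof -
  have "(\<integral>\<^sup>+x. ennreal (x\<^sup>2) \<partial>staircase_noise b g)
      = (\<integral>\<^sup>+x. ennreal (x\<^sup>2 * staircase_density b g x) \<partial>lborel)"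
    unfolding staircase_noise_def
    by (subst nn_integral_density)
       (auto intro!: nn_integral_cong simp: ennreal_mult'' staircase_density_nonneg[OF assms] mult.commute)
  also have "\<dots> = ennreal (staircase_second_moment b g)"
    by (rule nn_integral_square_staircase_density[OF assms])
  finally show ?thesis .
qed

lemma staircase_noise_translate_le:
  assumes "0 < b" "b < 1" "0 \<le> g" "\<bar>a0 - a1\<bar> \<le> 1" and [measurable]: "B \<in> sets borel"
  shows "measure (staircase_noise b g) {x \<in> space (staircase_noise b g). a0 + x \<in> B}
    \<le> measure (staircase_noise b g) {x \<in> space (staircase_noise b g). a1 + x \<in> B} / b"
proof -
  let ?N = "staircase_noise b g" and ?f = "\<lambda>x. ennreal (staircase_density b g x)"
  interpret prob_space ?N
    using assms(1-3) by (rule prob_space_staircase_noise)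
  have pointwise: "?f (y - a0) * indicator B y \<le> ennreal (1 / b) * (?f (y - a1) * indicator B y)" for y
  proof -
    have "b * staircase_density b g (y - a0) \<le> staircase_density b g (y - a1)"
      using assms by (intro staircase_density_le) auto
    then have "staircase_density b g (y - a0) \<le> 1 / b * staircase_density b g (y - a1)"
      using assms by (simp add: field_simps)
    then have "ennreal (staircase_density b g (y - a0)) \<le> ennreal (1 / b * staircase_density b g (y - a1))"
      by (rule ennreal_leI)
    then have "?f (y - a0) \<le> ennreal (1 / b) * ?f (y - a1)"
      using assms by (subst (asm) ennreal_mult') auto
    then show ?thesis
      by (auto split: split_indicator)
  qed
  have "emeasure ?N {x. a0 + x \<in> B} = (\<integral>\<^sup>+y. ?f (y - a0) * indicator B y \<partial>lborel)"
    unfolding staircase_noise_def by (rule emeasure_density_lborel_translate) auto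
  also have "\<dots> \<le> (\<integral>\<^sup>+y. ennreal (1 / b) * (?f (y - a1) * indicator B y) \<partial>lborel)"
    by (intro nn_integral_mono pointwise)
  also have "\<dots> = ennreal (1 / b) * emeasure ?N {x. a1 + x \<in> B}"
    unfolding staircase_noise_def
    by (subst emeasure_density_lborel_translate) (auto intro: nn_integral_cmult)
  finally have "ennreal (measure ?N {x. a0 + x \<in> B}) \<le> ennreal (measure ?N {x. a1 + x \<in> B} / b)"
    using assms by (simp add: emeasure_eq_measure ennreal_mult[symmetric])
  then show ?thesis
    using assms by (simp add: ennreal_le_iff)
qed

lemma staircase_second_moment_cube_le:
  fixes t :: real
  assumes "0 < t" "t < 1"
  shows "staircase_second_moment (t ^ 3) t \<le> t\<^sup>2 * (1 + t + t\<^sup>2) / (1 - t ^ 3)\<^sup>2"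
proof -
  define D where "D = 1 - t ^ 3"
  have "0 < D"
    using assms by (simp add: D_def power_less_one_iff)
  then have "0 < D + t\<^sup>2"
    by (simp add: add_pos_nonneg)
  \<comment> \<open>\<open>L\<close> is \<open>D\<^sup>2 / t ^ 3\<close> times the bracket in the definition, at \<open>b = t ^ 3\<close> and \<open>g = t\<close>\<close>
  define L where "L = 1 + 4 * t ^ 3 + (t ^ 3)\<^sup>2 + 3 * t * (1 + t ^ 3) * D + 3 * t\<^sup>2 * D\<^sup>2 + D ^ 3"
  have "staircase_second_moment (t ^ 3) t = t\<^sup>2 * L / (3 * (D + t\<^sup>2) * D\<^sup>2)"
  proof -
    have "t * D + t ^ 3 = t * (D + t\<^sup>2)"
      by (simp add: algebra_simps power2_eq_square power3_eq_cube)
    then show ?thesis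
      using assms \<open>0 < D\<close> unfolding staircase_second_moment_def D_def[symmetric] L_def
      by (simp add: divide_simps add_pos_nonneg) (simp add: algebra_simps eval_nat_numeral)
  qed
  also have "\<dots> \<le> t\<^sup>2 * (3 * (D + t\<^sup>2) * (1 + t + t\<^sup>2)) / (3 * (D + t\<^sup>2) * D\<^sup>2)"
  proof (intro divide_right_mono mult_left_mono)
    have "0 < 3 - t + t\<^sup>2 * (2 - t)"
      using assms by (simp add: add_pos_nonneg)
    then have "0 \<le> D + 3 * t\<^sup>2 + t ^ 5 * ((1 - t) * (3 - t + t\<^sup>2 * (2 - t)))"
      using assms \<open>0 < D\<close> by (intro add_nonneg_nonneg mult_nonneg_nonneg) auto
    also have "\<dots> = 3 * (D + t\<^sup>2) * (1 + t + t\<^sup>2) - L"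
      unfolding L_def D_def by (simp add: algebra_simps eval_nat_numeral)
    finally show "L \<le> 3 * (D + t\<^sup>2) * (1 + t + t\<^sup>2)"
      by simp
  qed (use \<open>0 < D\<close> in auto)
  also have "\<dots> = t\<^sup>2 * (1 + t + t\<^sup>2) / (1 - t ^ 3)\<^sup>2"
    using \<open>0 < D + t\<^sup>2\<close> unfolding D_def[symmetric] by simp
  finally show ?thesis .
qed

lemma staircase_second_moment_le_sigma_star_sq:
  assumes "0 < \<epsilon>"
  shows "staircase_second_moment (exp (-\<epsilon>)) (exp (-\<epsilon>/3)) \<le> sigma_star_sq \<epsilon>"
proof -
  define t where "t = exp (-\<epsilon>/3)"
  have t: "0 < t" "t < 1"
    using assms by (auto simp: t_def)
  have exps: "exp (-2*\<epsilon>/3) = t\<^sup>2" "exp (-\<epsilon>) = t ^ 3"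
    by (simp_all add: t_def exp_of_nat_mult[symmetric])
  have "t\<^sup>2 * (1 + t\<^sup>2) \<le> 2 powr (2/3) * t\<^sup>2 * (1 + t\<^sup>2)"
    using mult_right_mono[OF ge_one_powr_ge_zero[of 2 "2/3"], of "t\<^sup>2 * (1 + t\<^sup>2)"]
    by (simp add: mult.assoc)
  moreover have "t\<^sup>2 * (1 + t + t\<^sup>2) = t\<^sup>2 * (1 + t\<^sup>2) + t ^ 3"
    by (simp add: algebra_simps power2_eq_square power3_eq_cube)
  ultimately have numerator_le: "t\<^sup>2 * (1 + t + t\<^sup>2) \<le> 2 powr (2/3) * t\<^sup>2 * (1 + t\<^sup>2) + t ^ 3"
    by linarith
  have "staircase_second_moment (exp (-\<epsilon>)) (exp (-\<epsilon>/3)) = staircase_second_moment (t ^ 3) t"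
    by (simp add: exps t_def)
  also have "\<dots> \<le> t\<^sup>2 * (1 + t + t\<^sup>2) / (1 - t ^ 3)\<^sup>2"
    by (rule staircase_second_moment_cube_le[OF t])
  also have "\<dots> \<le> (2 powr (2/3) * t\<^sup>2 * (1 + t\<^sup>2) + t ^ 3) / (1 - t ^ 3)\<^sup>2"
    using numerator_le by (intro divide_right_mono) auto
  also have "\<dots> = sigma_star_sq \<epsilon>"
    unfolding sigma_star_sq_def exps by (simp add: mult.assoc)
  finally show ?thesis .
qed

lemma isCont_staircase_second_moment_exp:
  assumes "0 < \<epsilon>"
  shows "isCont (\<lambda>e. staircase_second_moment (exp (-e)) (exp (-e/3))) \<epsilon>"
proof -
  have "0 < exp (-\<epsilon>/3) * (1 - exp (-\<epsilon>)) + exp (-\<epsilon>)"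
    using assms by (simp add: add_nonneg_pos)
  then show ?thesis
    using assms unfolding staircase_second_moment_def by (intro continuous_intros) auto
qed

theorem lemma2:
  fixes \<epsilon> \<sigma>2 :: real
  assumes "\<epsilon> > 0" and "\<sigma>2 > sigma_star_sq \<epsilon>"
  shows "\<exists>(M :: real measure) (N :: real \<Rightarrow> real) \<epsilon>bar.
           prob_space M \<and> N \<in> borel_measurable M \<and>
           (\<integral>\<^sup>+ \<omega>. ennreal ((N \<omega>)^2) \<partial>M) \<le> ennreal \<sigma>2 \<and>
           \<epsilon>bar < \<epsilon> \<and>
           (\<forall>a0 a1 :: real. \<bar>a0 - a1\<bar> \<le> 1 \<longrightarrow>
              (\<forall>B \<in> sets borel.
                 measure M {\<omega> \<in> space M. a0 + N \<omega> \<in> B}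
                   \<le> exp \<epsilon>bar * measure M {\<omega> \<in> space M. a1 + N \<omega> \<in> B}))"
proof -
  let ?V = "\<lambda>e. staircase_second_moment (exp (-e)) (exp (-e/3))"
  have "?V \<epsilon> < \<sigma>2"
    using staircase_second_moment_le_sigma_star_sq[OF assms(1)] assms(2) by linarith
  then obtain e where e: "0 < e" "e < \<epsilon>" "?V e < \<sigma>2"
    using isCont_less_on_left[OF isCont_staircase_second_moment_exp[OF assms(1)]] assms(1) by blast
  define N where "N = staircase_noise (exp (-e)) (exp (-e/3))"
  have params: "0 < exp (-e)" "exp (-e) < 1" "0 \<le> exp (-e/3)"
    using e by auto
  have "(\<integral>\<^sup>+x. ennreal (x\<^sup>2) \<partial>N) \<le> ennreal \<sigma>2"
    unfolding N_def nn_integral_square_staircase_noise[OF params] using e by (simp add: ennreal_leI)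
  moreover have "measure N {x \<in> space N. a0 + x \<in> B} \<le> exp e * measure N {x \<in> space N. a1 + x \<in> B}"
    if "\<bar>a0 - a1\<bar> \<le> 1" "B \<in> sets borel" for a0 a1 B
    using staircase_noise_translate_le[OF params that] by (simp add: N_def exp_minus field_simps)
  moreover have "prob_space N"
    unfolding N_def using params by (rule prob_space_staircase_noise)
  ultimately show ?thesis
    using e by (intro exI[of _ N] exI[of _ "\<lambda>x. x"] exI[of _ e]) (auto simp: N_def)
qed

end
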